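(* Let $G=(V,E)$ be a finite graph with special vertex $i$, symmetric edge weights $w_E$ (with $w_E(u,v)=0$ for $uv\notin E$) and vertex weights $w_V$ (nonnegative, not identically zero). If $G$ and $G-i$ are each positively connected, then the largest eigenvalue of $L_i^{-1}W_{V,i}$ is simple. Equivalently, up to multiplication by $-1$, the solution of $$\min_{\|g\|_w=1,\ g(i)=0}\ \sum_{jk\in E} w_E(j,k)\,(g(k)-g(j))^2$$ is unique.
   Context: $\|g\|_w=\sqrt{\sum_{u\in V}w_V(u)g(u)^2}$; each edge is counted once. $L=D-W_E$ is the weighted Laplacian, with $W_E=(w_E(u,v))$ and $D$ diagonal with $d(k)=\sum_j w_E(k,j)$; $L_i$ is $L$ with row and column $i$ deleted (invertible under the hypotheses); $W_{V,i}$ is the diagonal matrix of vertex weights with row and column $i$ deleted. A weighted graph is positively connected if any two vertices are joined by a path of positive-weight edges; $G-i$ is $G$ with $i$ deleted. *)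

theory Defs
  imports "HOL-Analysis.Analysis" "HOL-Computational_Algebra.Polynomial"
begin

text \<open>Vertex set of G is the finite type 'm option; the special vertex i is None,
  so the vertex set of G - i is (a copy of) the type 'm.
  Edge weights: wE :: 'm option => 'm option => real (zero on non-edges).\<close>

definition pos_connected :: "'v set \<Rightarrow> ('v \<Rightarrow> 'v \<Rightarrow> real) \<Rightarrow> bool" where
  "pos_connected S w \<longleftrightarrow>
     (\<forall>u\<in>S. \<forall>v\<in>S. (\<lambda>x y. x \<in> S \<and> y \<in> S \<and> w x y > 0)\<^sup>*\<^sup>* u v)"

definition laplacian :: "('v::finite \<Rightarrow> 'v \<Rightarrow> real) \<Rightarrow> 'v \<Rightarrow> 'v \<Rightarrow> real" where
  "laplacian w j k = (if j = k then (\<Sum>l\<in>UNIV. w j l) else 0) - w j k"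

definition lap_del :: "('m::finite option \<Rightarrow> 'm option \<Rightarrow> real) \<Rightarrow> real^'m^'m" where
  "lap_del w = (\<chi> j k. laplacian w (Some j) (Some k))"

definition wv_del :: "('m::finite option \<Rightarrow> real) \<Rightarrow> real^'m^'m" where
  "wv_del wV = (\<chi> j k. if j = k then wV (Some j) else 0)"

definition charpoly :: "real^'m^'m \<Rightarrow> real poly" where
  "charpoly A = det (\<chi> j k. (if j = k then [:0, 1:] else 0) - [:A $ j $ k:])"

definition real_eigenvalue :: "real^'m^'m \<Rightarrow> real \<Rightarrow> bool" where
  "real_eigenvalue A \<mu> \<longleftrightarrow> (\<exists>v. v \<noteq> 0 \<and> A *v v = \<mu> *\<^sub>R v)"

end

theory Submission
  imports Defs
begin

(* Let \<mu> be the maximum of the Rayleigh quotient x' W x / x' L x, where L = L_i is positive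
   definite because G - i is connected and some vertex of it is joined to i. Then
   N = \<mu> L - W is positive semidefinite and its kernel consists of the maximisers. Since
   ||x(j)| - |x(k)|| \<le> |x(j) - x(k)|, the vector |x| lies in the kernel together with x, and
   the kernel equation, propagated along the positive edges of the connected graph G - i,
   forces a nonnegative nonzero kernel vector to be strictly positive. So no nonzero kernel
   vector has a zero entry, and the kernel is spanned by a single vector v. Hence \<mu> is the
   largest eigenvalue of L^-1 W, and det (a L - W) = det ((a - \<mu>) L + N) has a simple zero
   at \<mu> because N is symmetric with kernel spanned by v and v' L v > 0. *)

section \<open>Symmetric matrices and determinantal pencils\<close>

lemma poly_det: "poly (det P) a = det (\<chi> i j. poly (P $ i $ j) a)"
  unfolding det_def by (simp add: poly_sum poly_prod)

lemma poly_charpoly: "poly (charpoly A) a = det (a *\<^sub>R mat 1 - A)"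
  unfolding charpoly_def poly_det by (intro arg_cong[where f = det]) (simp add: vec_eq_iff mat_def)

lemma det_nonzero_if_kernel_trivial:
  fixes A :: "real^'n^'n"
  assumes "\<And>x. A *v x = 0 \<Longrightarrow> x = 0"
  shows "det A \<noteq> 0"
  using assms by (simp add: invertible_det_nz[symmetric] invertible_left_inverse matrix_left_invertible_ker)

lemma
  fixes A :: "real^'n^'n"
  assumes "invertible A"
  shows matrix_inv_right: "A ** matrix_inv A = mat 1"
    and matrix_inv_left: "matrix_inv A ** A = mat 1"
  using someI_ex[OF assms[unfolded invertible_def]] by (simp_all add: matrix_inv_def)

lemma inner_symmetric_matrix:
  fixes N :: "real^'n^'n"
  assumes "transpose N = N"
  shows "x \<bullet> (N *v y) = (N *v x) \<bullet> y"
  by (metis assms dot_lmul_matrix transpose_matrix_vector)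

lemma quadratic_form_scaleR_diff:
  fixes A B :: "real^'n^'n"
  shows "y \<bullet> ((c *\<^sub>R A - B) *v y) = c * (y \<bullet> (A *v y)) - y \<bullet> (B *v y)"
  by (simp add: matrix_vector_mult_diff_rdistrib scaleR_matrix_vector_assoc[symmetric] inner_diff_right)

lemma psd_quadratic_form_zero_imp_kernel:
  fixes N :: "real^'n^'n"
  assumes sym: "transpose N = N" and psd: "\<And>y. 0 \<le> y \<bullet> (N *v y)"
    and zero: "x \<bullet> (N *v x) = 0"
  shows "N *v x = 0"
proof (rule ccontr)
  define h where "h = N *v x"
  define c where "c = h \<bullet> (N *v h)"
  define t where "t = (h \<bullet> h) / (c + 1)"
  assume "N *v x \<noteq> 0"
  then have hh: "0 < h \<bullet> h" by (simp add: h_def)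
  have c: "0 \<le> c" using psd by (simp add: c_def)
  then have t: "0 < t" using hh by (simp add: t_def)
  have "t * c < 2 * (h \<bullet> h)"
  proof -
    have "t * c = (h \<bullet> h) * (c / (c + 1))" using c by (simp add: t_def field_simps)
    also have "\<dots> \<le> h \<bullet> h" using c hh by (intro mult_left_le) auto
    finally show ?thesis using hh by linarith
  qed
  then have "t * (t * c - 2 * (h \<bullet> h)) < 0" using t by (simp add: mult_pos_neg)
  moreover have "(x - t *\<^sub>R h) \<bullet> (N *v (x - t *\<^sub>R h)) = t * (t * c - 2 * (h \<bullet> h))"
    using inner_symmetric_matrix[OF sym, of x h] zero
    by (simp add: h_def c_def algebra_simps inner_commute)
  ultimately show False using psd[of "x - t *\<^sub>R h"] by linarith
qed

lemma kernel_eq_span_if_entries_nonzero: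
  fixes N :: "real^'n^'m"
  assumes nonzero: "\<And>x j. N *v x = 0 \<Longrightarrow> x \<noteq> 0 \<Longrightarrow> x $ j \<noteq> 0"
    and Nv: "N *v v = 0" and "v \<noteq> 0"
  shows "N *v x = 0 \<longleftrightarrow> (\<exists>c. x = c *\<^sub>R v)"
proof
  obtain k :: 'n where True by simp
  assume Nx: "N *v x = 0"
  define z where "z = x - (x $ k / v $ k) *\<^sub>R v"
  have "v $ k \<noteq> 0" using nonzero Nv \<open>v \<noteq> 0\<close> by blast
  then have "z $ k = 0" by (simp add: z_def)
  moreover have "N *v z = 0" using Nx Nv by (simp add: z_def algebra_simps)
  ultimately have "z = 0" using nonzero by blast
  then show "\<exists>c. x = c *\<^sub>R v" by (auto simp: z_def)
qed (use Nv in \<open>auto simp: algebra_simps\<close>)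

lemma det_replace_column_image:
  fixes A :: "real^'n^'n"
  assumes "A *v v = c *\<^sub>R w"
  shows "v $ k * det A = c * det (\<chi> i j. if j = k then w $ i else A $ i $ j)"
proof -
  let ?C = "\<chi> i j. if j = k then w $ i else A $ i $ j"
  have Cy: "?C *v (c *\<^sub>R axis k 1) = A *v v"
    by (simp add: assms matrix_vector_mult_basis matrix_vector_mult_scaleR column_def vec_eq_iff)
  have "v $ k * det A = det (\<chi> i j. if j = k then (A *v v) $ i else A $ i $ j)"
    by (rule cramer_lemma[symmetric])
  also have "\<dots> = det (\<chi> i j. if j = k then (?C *v (c *\<^sub>R axis k 1)) $ i else ?C $ i $ j)"
    unfolding Cy by (intro arg_cong[where f = det]) (simp add: vec_eq_iff)
  also have "\<dots> = c * det ?C" by (simp add: cramer_lemma)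
  finally show ?thesis .
qed

lemma det_replace_kernel_column_nonzero:
  fixes P N :: "real^'n^'n"
  assumes sym: "transpose N = N"
    and ker: "\<And>x. N *v x = 0 \<longleftrightarrow> (\<exists>c. x = c *\<^sub>R v)"
    and vPv: "v \<bullet> (P *v v) \<noteq> 0" and vk: "v $ k \<noteq> 0"
  shows "det (\<chi> i j. if j = k then (P *v v) $ i else N $ i $ j) \<noteq> 0"
proof (rule det_nonzero_if_kernel_trivial)
  let ?C = "\<chi> i j. if j = k then (P *v v) $ i else N $ i $ j"
  fix x assume Cx: "?C *v x = 0"
  define y where "y = x - x $ k *\<^sub>R axis k 1"
  have "(?C *v x) $ i = (N *v y) $ i + x $ k * (P *v v) $ i" for i
  proof -
    have "(?C *v x) $ i = (\<Sum>j\<in>UNIV. (if j = k then 0 else N $ i $ j * x $ j)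
                                    + (if j = k then x $ k * (P *v v) $ i else 0))"
      unfolding matrix_vector_mult_def vec_lambda_beta by (intro sum.cong) auto
    also have "\<dots> = (\<Sum>j\<in>UNIV. if j = k then 0 else N $ i $ j * x $ j) + x $ k * (P *v v) $ i"
      by (simp add: sum.distrib)
    also have "(\<Sum>j\<in>UNIV. if j = k then 0 else N $ i $ j * x $ j) = (N *v y) $ i"
      unfolding matrix_vector_mult_def y_def vec_lambda_beta by (intro sum.cong) (auto simp: axis_def)
    finally show ?thesis .
  qed
  then have Cx_split: "?C *v x = N *v y + x $ k *\<^sub>R (P *v v)" by (simp add: vec_eq_iff)
  have Nv: "N *v v = 0" using ker[of v] by (metis scaleR_one)
  have "0 = v \<bullet> (?C *v x)" using Cx by simp
  also have "\<dots> = v \<bullet> (N *v y) + x $ k * (v \<bullet> (P *v v))"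
    by (simp add: Cx_split inner_add_right)
  also have "v \<bullet> (N *v y) = 0"
    using inner_symmetric_matrix[OF sym, of v y] Nv by simp
  finally have xk: "x $ k = 0" using vPv by simp
  then have "N *v x = 0" using Cx Cx_split by (simp add: y_def)
  then obtain c where "x = c *\<^sub>R v" using ker by blast
  then show "x = 0" using xk vk by simp
qed

lemma order_det_pencil_eq_1:
  fixes P N :: "real^'n^'n"
  assumes sym: "transpose N = N"
    and ker: "\<And>x. N *v x = 0 \<longleftrightarrow> (\<exists>c. x = c *\<^sub>R v)"
    and vPv: "v \<bullet> (P *v v) \<noteq> 0"
    and p: "\<And>a. poly p a = det ((a - \<mu>) *\<^sub>R P + N)"
  shows "order \<mu> p = 1"
proof -
  have "v \<noteq> 0" using vPv by auto
  then obtain k where vk: "v $ k \<noteq> 0" by (auto simp: vec_eq_iff)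
  have Nv: "N *v v = 0" using ker[of v] by (metis scaleR_one)
  define q where "q = det (\<chi> i j. if j = k then [:(P *v v) $ i:]
                                    else [:N $ i $ j - \<mu> * P $ i $ j, P $ i $ j:])"
  have "v $ k * poly p a = (a - \<mu>) * poly q a" for a
  proof -
    have "((a - \<mu>) *\<^sub>R P + N) *v v = (a - \<mu>) *\<^sub>R (P *v v)"
      by (simp add: Nv matrix_vector_mult_add_rdistrib scaleR_matrix_vector_assoc)
    then have "v $ k * poly p a
        = (a - \<mu>) * det (\<chi> i j. if j = k then (P *v v) $ i else ((a - \<mu>) *\<^sub>R P + N) $ i $ j)"
      unfolding p by (rule det_replace_column_image)
    also have "det (\<chi> i j. if j = k then (P *v v) $ i else ((a - \<mu>) *\<^sub>R P + N) $ i $ j) = poly q a"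
      unfolding q_def poly_det by (intro arg_cong[where f = det]) (simp add: vec_eq_iff algebra_simps)
    finally show ?thesis .
  qed
  then have factor: "smult (v $ k) p = [:-\<mu>, 1:] * q"
    by (intro poly_eq_poly_eq_iff[THEN iffD1]) (simp add: fun_eq_iff algebra_simps)
  have "poly q \<mu> = det (\<chi> i j. if j = k then (P *v v) $ i else N $ i $ j)"
    unfolding q_def poly_det by (intro arg_cong[where f = det]) (simp add: vec_eq_iff)
  then have "poly q \<mu> \<noteq> 0" using det_replace_kernel_column_nonzero[OF sym ker vPv vk] by simp
  then have "order \<mu> q = 0" and "q \<noteq> 0" by (auto simp: order_0I)
  moreover from \<open>q \<noteq> 0\<close> have "[:-\<mu>, 1:] * q \<noteq> 0"
    by (metis mult_eq_0_iff pCons_eq_0_iff zero_neq_one)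
  ultimately have "order \<mu> ([:-\<mu>, 1:] * q) = 1"
    using order_mult[of "[:-\<mu>, 1:]" q \<mu>] order_power_n_n[of \<mu> 1] by simp
  then show ?thesis using order_smult[OF vk, of \<mu> p] by (simp only: factor)
qed

section \<open>The generalized eigenvalue problem W x = \<lambda> L x\<close>

lemma invertible_if_pos_def:
  fixes L :: "real^'n^'n"
  assumes "\<And>x. x \<noteq> 0 \<Longrightarrow> 0 < x \<bullet> (L *v x)"
  shows "invertible L"
  unfolding invertible_left_inverse matrix_left_invertible_ker
  using assms by (metis inner_zero_right less_irrefl)

lemma det_mult_charpoly_inv_mult:
  fixes L W :: "real^'n^'n"
  assumes "invertible L"
  shows "det L * poly (charpoly (matrix_inv L ** W)) a = det (a *\<^sub>R L - W)"
proof -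
  have "L ** (a *\<^sub>R mat 1 - matrix_inv L ** W) = L ** (a *\<^sub>R mat 1) - L ** (matrix_inv L ** W)"
    by (simp add: matrix_matrix_mult_def vec_eq_iff right_diff_distrib sum_subtractf)
  also have "\<dots> = a *\<^sub>R L - W"
    by (simp add: matrix_scalar_ac matrix_mul_assoc matrix_inv_right[OF assms])
  finally show ?thesis by (simp add: poly_charpoly det_mul[symmetric])
qed

lemma real_eigenvalue_inv_mult_iff:
  fixes L W :: "real^'n^'n"
  assumes "invertible L"
  shows "real_eigenvalue (matrix_inv L ** W) lam \<longleftrightarrow> (\<exists>x. x \<noteq> 0 \<and> W *v x = lam *\<^sub>R (L *v x))"
proof -
  have "matrix_inv L ** W *v x = lam *\<^sub>R x \<longleftrightarrow> W *v x = lam *\<^sub>R (L *v x)" for x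
  proof
    assume "matrix_inv L ** W *v x = lam *\<^sub>R x"
    then have "L *v (matrix_inv L ** W *v x) = lam *\<^sub>R (L *v x)"
      by (simp add: matrix_vector_mult_scaleR)
    then show "W *v x = lam *\<^sub>R (L *v x)"
      by (simp add: matrix_vector_mul_assoc matrix_mul_assoc matrix_inv_right[OF assms])
  next
    assume "W *v x = lam *\<^sub>R (L *v x)"
    then have "matrix_inv L *v (W *v x) = lam *\<^sub>R (matrix_inv L *v (L *v x))"
      by (simp add: matrix_vector_mult_scaleR)
    then show "matrix_inv L ** W *v x = lam *\<^sub>R x"
      by (simp add: matrix_vector_mul_assoc matrix_inv_left[OF assms])
  qed
  then show ?thesis by (simp add: real_eigenvalue_def)
qed

lemma rayleigh_quotient_attains_max:
  fixes L W :: "real^'n^'n"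
  assumes Lpos: "\<And>x. x \<noteq> 0 \<Longrightarrow> 0 < x \<bullet> (L *v x)"
  obtains g \<mu> where "g \<noteq> 0" and "g \<bullet> (W *v g) = \<mu> * (g \<bullet> (L *v g))"
    and "\<And>y. y \<bullet> (W *v y) \<le> \<mu> * (y \<bullet> (L *v y))"
proof -
  define R where "R y = (y \<bullet> (W *v y)) / (y \<bullet> (L *v y))" for y
  have R_scale: "R (c *\<^sub>R y) = R y" if "c \<noteq> 0" for c y
    using that by (simp add: R_def matrix_vector_mult_scaleR)
  have "y \<bullet> (L *v y) \<noteq> 0" if "y \<in> sphere 0 1" for y
    using Lpos[of y] that by fastforce
  then have "continuous_on (sphere 0 1) R"
    unfolding R_def
    by (intro continuous_intros linear_continuous_on matrix_vector_mul_bounded_linear) auto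
  moreover have "sphere (0::real^'n) 1 \<noteq> {}" by simp
  ultimately obtain g where g: "g \<in> sphere 0 1" and max: "\<And>y. y \<in> sphere 0 1 \<Longrightarrow> R y \<le> R g"
    using continuous_attains_sup[OF compact_sphere] by blast
  have "y \<bullet> (W *v y) \<le> R g * (y \<bullet> (L *v y))" for y
  proof (cases "y = 0")
    case False
    then have "R y \<le> R g"
      using max[of "(1 / norm y) *\<^sub>R y"] R_scale[of "1 / norm y" y] by simp
    then show ?thesis using Lpos[OF False] by (simp add: R_def divide_le_eq)
  qed simp
  moreover have "g \<noteq> 0" using g by auto
  moreover have "g \<bullet> (W *v g) = R g * (g \<bullet> (L *v g))"
    using Lpos[OF \<open>g \<noteq> 0\<close>] by (simp add: R_def)
  ultimately show ?thesis using that by blast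
qed

lemma largest_eigenvalue_inv_mult_simple:
  fixes L W :: "real^'n^'n"
  assumes Lpos: "\<And>x. x \<noteq> 0 \<Longrightarrow> 0 < x \<bullet> (L *v x)"
    and bound: "\<And>y. y \<bullet> (W *v y) \<le> \<mu> * (y \<bullet> (L *v y))"
    and sym: "transpose (\<mu> *\<^sub>R L - W) = \<mu> *\<^sub>R L - W"
    and ker: "\<And>x. (\<mu> *\<^sub>R L - W) *v x = 0 \<longleftrightarrow> (\<exists>c. x = c *\<^sub>R v)"
    and "v \<noteq> 0"
  shows "real_eigenvalue (matrix_inv L ** W) \<mu>"
    and "\<And>lam. real_eigenvalue (matrix_inv L ** W) lam \<Longrightarrow> lam \<le> \<mu>"
    and "order \<mu> (charpoly (matrix_inv L ** W)) = 1"
proof -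
  have invL: "invertible L" using Lpos by (rule invertible_if_pos_def)
  have "(\<mu> *\<^sub>R L - W) *v v = 0" using ker[of v] by (metis scaleR_one)
  then have "W *v v = \<mu> *\<^sub>R (L *v v)"
    by (simp add: matrix_vector_mult_diff_rdistrib scaleR_matrix_vector_assoc)
  then show "real_eigenvalue (matrix_inv L ** W) \<mu>"
    using \<open>v \<noteq> 0\<close> by (auto simp: real_eigenvalue_inv_mult_iff[OF invL])
  show "lam \<le> \<mu>" if eigen: "real_eigenvalue (matrix_inv L ** W) lam" for lam
  proof -
    obtain x where "x \<noteq> 0" and "W *v x = lam *\<^sub>R (L *v x)"
      using eigen by (auto simp: real_eigenvalue_inv_mult_iff[OF invL])
    then have "lam * (x \<bullet> (L *v x)) \<le> \<mu> * (x \<bullet> (L *v x))" using bound[of x] by simp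
    then show ?thesis using Lpos[OF \<open>x \<noteq> 0\<close>] by simp
  qed
  have "order \<mu> (smult (det L) (charpoly (matrix_inv L ** W))) = 1"
  proof (rule order_det_pencil_eq_1[OF sym ker])
    show "v \<bullet> (L *v v) \<noteq> 0" using Lpos[OF \<open>v \<noteq> 0\<close>] by simp
    show "poly (smult (det L) (charpoly (matrix_inv L ** W))) a
        = det ((a - \<mu>) *\<^sub>R L + (\<mu> *\<^sub>R L - W))" for a
      using det_mult_charpoly_inv_mult[OF invL] by (simp add: algebra_simps)
  qed
  moreover have "det L \<noteq> 0" using invL by (simp add: invertible_det_nz)
  ultimately show "order \<mu> (charpoly (matrix_inv L ** W)) = 1" by (simp add: order_smult)
qed

section \<open>The reduced Laplacian\<close>

lemma pos_connected_induct:
  assumes "pos_connected S w" and "u \<in> S" and "v \<in> S" and "P u"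
    and step: "\<And>x y. x \<in> S \<Longrightarrow> y \<in> S \<Longrightarrow> 0 < w x y \<Longrightarrow> P x \<Longrightarrow> P y"
  shows "P v"
proof -
  have "(\<lambda>x y. x \<in> S \<and> y \<in> S \<and> 0 < w x y)\<^sup>*\<^sup>* u v"
    using assms(1-3) by (simp add: pos_connected_def)
  then show ?thesis by (induction rule: rtranclp_induct) (use \<open>P u\<close> step in auto)
qed

lemma pos_connected_edge_to_None:
  fixes w :: "'m::finite option \<Rightarrow> 'm option \<Rightarrow> real"
  assumes "pos_connected UNIV w"
  shows "\<exists>j. 0 < w (Some j) None"
proof (rule ccontr)
  obtain j0 :: 'm where True by simp
  assume "\<nexists>j. 0 < w (Some j) None"
  then have "None \<noteq> (None :: 'm option)"
    by (intro pos_connected_induct[OF assms, of "Some j0" None "\<lambda>u. u \<noteq> None"]) (auto, metis not_None_eq)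
  then show False by simp
qed

lemma sum_UNIV_option:
  "(\<Sum>u\<in>UNIV. f u) = f None + (\<Sum>j\<in>UNIV. f (Some (j :: 'm::finite)))"
  by (simp add: UNIV_option_conv sum.reindex)

lemma lap_del_mult_nth:
  "(lap_del wE *v x) $ j
     = (\<Sum>u\<in>UNIV. wE (Some j) u) * x $ j - (\<Sum>k\<in>UNIV. wE (Some j) (Some k) * x $ k)"
proof -
  have "(lap_del wE *v x) $ j = (\<Sum>k\<in>UNIV. (if k = j then (\<Sum>u\<in>UNIV. wE (Some j) u) * x $ j else 0)
                                             - wE (Some j) (Some k) * x $ k)"
    unfolding matrix_vector_mult_def lap_del_def laplacian_def vec_lambda_beta
    by (intro sum.cong) (auto simp: algebra_simps)
  then show ?thesis by (simp add: sum_subtractf)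
qed

lemma lap_del_quadratic_form:
  fixes wE :: "'m::finite option \<Rightarrow> 'm option \<Rightarrow> real"
  assumes sym: "\<And>u v. wE u v = wE v u"
  shows "x \<bullet> (lap_del wE *v x) = (\<Sum>j\<in>UNIV. wE (Some j) None * (x $ j)\<^sup>2)
     + (\<Sum>j\<in>UNIV. \<Sum>k\<in>UNIV. wE (Some j) (Some k) * (x $ j - x $ k)\<^sup>2) / 2"
proof -
  let ?w = "\<lambda>j k. wE (Some j) (Some k)"
  have swap: "(\<Sum>j\<in>UNIV. \<Sum>k\<in>UNIV. ?w j k * (x $ k)\<^sup>2) = (\<Sum>j\<in>UNIV. \<Sum>k\<in>UNIV. ?w j k * (x $ j)\<^sup>2)"
    by (subst sum.swap) (simp add: sym)
  have "x \<bullet> (lap_del wE *v x) = (\<Sum>j\<in>UNIV. wE (Some j) None * (x $ j)\<^sup>2)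
      + (\<Sum>j\<in>UNIV. \<Sum>k\<in>UNIV. ?w j k * (x $ j)\<^sup>2) - (\<Sum>j\<in>UNIV. \<Sum>k\<in>UNIV. ?w j k * x $ j * x $ k)"
    by (simp add: inner_vec_def lap_del_mult_nth sum_UNIV_option[of "wE (Some _)"] algebra_simps
        power2_eq_square sum.distrib sum_subtractf sum_distrib_left sum_distrib_right)
  moreover have "(\<Sum>j\<in>UNIV. \<Sum>k\<in>UNIV. ?w j k * (x $ j - x $ k)\<^sup>2)
      = (\<Sum>j\<in>UNIV. \<Sum>k\<in>UNIV. ?w j k * (x $ j)\<^sup>2) + (\<Sum>j\<in>UNIV. \<Sum>k\<in>UNIV. ?w j k * (x $ k)\<^sup>2)
        - 2 * (\<Sum>j\<in>UNIV. \<Sum>k\<in>UNIV. ?w j k * x $ j * x $ k)"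
    by (simp add: sum.distrib sum_subtractf sum_distrib_left power2_eq_square algebra_simps)
  ultimately show ?thesis unfolding swap by simp
qed

lemma lap_del_pos_def:
  fixes wE :: "'m::finite option \<Rightarrow> 'm option \<Rightarrow> real"
  assumes sym: "\<And>u v. wE u v = wE v u" and nonneg: "\<And>u v. 0 \<le> wE u v"
    and conn_G: "pos_connected UNIV wE" and conn_Gi: "pos_connected (UNIV - {None}) wE"
    and "x \<noteq> 0"
  shows "0 < x \<bullet> (lap_del wE *v x)"
proof (rule ccontr)
  define A where "A = (\<Sum>j\<in>UNIV. wE (Some j) None * (x $ j)\<^sup>2)"
  define B where "B = (\<Sum>j\<in>UNIV. \<Sum>k\<in>UNIV. wE (Some j) (Some k) * (x $ j - x $ k)\<^sup>2)"
  have "0 \<le> A" "0 \<le> B" unfolding A_def B_def by (auto intro!: sum_nonneg simp: nonneg)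
  moreover assume "\<not> 0 < x \<bullet> (lap_del wE *v x)"
  ultimately have "A = 0" "B = 0" unfolding lap_del_quadratic_form[OF sym] A_def[symmetric]
      B_def[symmetric] by linarith+
  then have to_None: "wE (Some j) None * (x $ j)\<^sup>2 = 0"
    and inner: "wE (Some j) (Some k) * (x $ j - x $ k)\<^sup>2 = 0" for j k
    unfolding A_def B_def by (simp_all add: sum_nonneg_eq_0_iff sum_nonneg nonneg)
  obtain j0 where "0 < wE (Some j0) None" using pos_connected_edge_to_None[OF conn_G] ..
  then have "x $ j0 = 0" using to_None[of j0] by simp
  have zero: "x $ the u = 0" if "u \<in> UNIV - {None}" for u
  proof (rule pos_connected_induct[OF conn_Gi _ that])
    show "x $ the v' = 0" if "u' \<in> UNIV - {None}" "v' \<in> UNIV - {None}" "0 < wE u' v'"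
      "x $ the u' = 0" for u' v'
      using that inner[of "the u'" "the v'"] by auto
  qed (use \<open>x $ j0 = 0\<close> in auto)
  have "x = 0" using zero[of "Some _"] by (simp add: vec_eq_iff)
  with \<open>x \<noteq> 0\<close> show False ..
qed

lemma lap_del_abs_le:
  assumes sym: "\<And>u v. wE u v = wE v u" and nonneg: "\<And>u v. 0 \<le> wE u v"
  shows "(\<chi> j. \<bar>x $ j\<bar>) \<bullet> (lap_del wE *v (\<chi> j. \<bar>x $ j\<bar>)) \<le> x \<bullet> (lap_del wE *v x)"
proof -
  have "(\<bar>a\<bar> - \<bar>b\<bar>)\<^sup>2 \<le> (a - b)\<^sup>2" for a b :: real
    using abs_triangle_ineq3[of a b] by (simp add: abs_le_square_iff[symmetric])
  then show ?thesis
    unfolding lap_del_quadratic_form[OF sym]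
    by (auto intro!: sum_mono mult_left_mono divide_right_mono simp: nonneg)
qed

lemma wv_del_mult_nth: "(wv_del wV *v x) $ j = wV (Some j) * x $ j"
  by (simp add: matrix_vector_mult_def wv_del_def if_distrib[of "\<lambda>c. c * _"] cong: if_cong)

lemma wv_del_quadratic_form: "x \<bullet> (wv_del wV *v x) = (\<Sum>j\<in>UNIV. wV (Some j) * (x $ j)\<^sup>2)"
  by (simp add: inner_vec_def wv_del_mult_nth power2_eq_square mult_ac)

lemma wv_del_pos:
  assumes "\<And>v. 0 \<le> wV v" and "\<exists>v. v \<noteq> None \<and> wV v \<noteq> 0"
  shows "\<exists>y. 0 < y \<bullet> (wv_del wV *v y)"
proof -
  obtain j where "0 < wV (Some j)" using assms by (metis less_eq_real_def not_None_eq)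
  then have "0 < axis j 1 \<bullet> (wv_del wV *v axis j 1)"
    by (simp add: wv_del_quadratic_form axis_def if_distrib[of "\<lambda>c. _ * c\<^sup>2"] cong: if_cong)
  then show ?thesis ..
qed

lemma transpose_scaleR_lap_del_diff_wv_del:
  assumes "\<And>u v. wE u v = wE v u"
  shows "transpose (c *\<^sub>R lap_del wE - wv_del wV) = c *\<^sub>R lap_del wE - wv_del wV"
  by (simp add: transpose_def lap_del_def laplacian_def wv_del_def vec_eq_iff assms)

section \<open>The kernel of \<mu> L_i - W_{V,i}\<close>

lemma lap_del_kernel_abs:
  assumes sym: "\<And>u v. wE u v = wE v u" and nonneg: "\<And>u v. 0 \<le> wE u v" and "0 \<le> \<mu>"
    and bound: "\<And>y. y \<bullet> (wv_del wV *v y) \<le> \<mu> * (y \<bullet> (lap_del wE *v y))"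
    and "(\<mu> *\<^sub>R lap_del wE - wv_del wV) *v x = 0"
  shows "(\<mu> *\<^sub>R lap_del wE - wv_del wV) *v (\<chi> j. \<bar>x $ j\<bar>) = 0"
proof (rule psd_quadratic_form_zero_imp_kernel[OF transpose_scaleR_lap_del_diff_wv_del[OF sym]])
  show psd: "0 \<le> y \<bullet> ((\<mu> *\<^sub>R lap_del wE - wv_del wV) *v y)" for y
    using bound[of y] by (simp add: quadratic_form_scaleR_diff)
  have "\<mu> * ((\<chi> j. \<bar>x $ j\<bar>) \<bullet> (lap_del wE *v (\<chi> j. \<bar>x $ j\<bar>))) \<le> \<mu> * (x \<bullet> (lap_del wE *v x))"
    using lap_del_abs_le[OF sym nonneg] \<open>0 \<le> \<mu>\<close> by (rule mult_left_mono)
  then have "(\<chi> j. \<bar>x $ j\<bar>) \<bullet> ((\<mu> *\<^sub>R lap_del wE - wv_del wV) *v (\<chi> j. \<bar>x $ j\<bar>))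
      \<le> x \<bullet> ((\<mu> *\<^sub>R lap_del wE - wv_del wV) *v x)"
    by (simp add: quadratic_form_scaleR_diff wv_del_quadratic_form)
  then show "(\<chi> j. \<bar>x $ j\<bar>) \<bullet> ((\<mu> *\<^sub>R lap_del wE - wv_del wV) *v (\<chi> j. \<bar>x $ j\<bar>)) = 0"
    using psd \<open>_ *v x = 0\<close> by (simp add: order_antisym)
qed

lemma lap_del_kernel_nonneg_pos:
  fixes wE :: "'m::finite option \<Rightarrow> 'm option \<Rightarrow> real"
  assumes nonneg: "\<And>u v. 0 \<le> wE u v" and conn_Gi: "pos_connected (UNIV - {None}) wE"
    and "\<mu> \<noteq> 0" and ker: "(\<mu> *\<^sub>R lap_del wE - wv_del wV) *v y = 0"
    and y_nonneg: "\<And>j. 0 \<le> y $ j" and "y \<noteq> 0"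
  shows "0 < y $ k"
proof (rule ccontr)
  have zero_spreads: "y $ k' = 0" if "0 < wE (Some j) (Some k')" and "y $ j = 0" for j k'
  proof -
    have eq: "\<mu> *\<^sub>R (lap_del wE *v y) = wv_del wV *v y"
      using ker by (simp add: matrix_vector_mult_diff_rdistrib scaleR_matrix_vector_assoc)
    have "\<mu> * (lap_del wE *v y) $ j = wV (Some j) * y $ j"
      using arg_cong[OF eq, of "\<lambda>z. z $ j"] by (simp add: wv_del_mult_nth)
    then have "(\<Sum>k\<in>UNIV. wE (Some j) (Some k) * y $ k) = 0"
      using \<open>y $ j = 0\<close> \<open>\<mu> \<noteq> 0\<close> by (simp add: lap_del_mult_nth)
    then have "wE (Some j) (Some k') * y $ k' = 0"
      by (simp add: sum_nonneg_eq_0_iff nonneg y_nonneg)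
    then show ?thesis using that(1) by simp
  qed
  assume "\<not> 0 < y $ k"
  then have "y $ k = 0" using y_nonneg[of k] by simp
  have zero: "y $ the u = 0" if "u \<in> UNIV - {None}" for u
    by (rule pos_connected_induct[OF conn_Gi _ that, of "Some k"])
       (use \<open>y $ k = 0\<close> zero_spreads in auto)
  have "y = 0" using zero[of "Some _"] by (simp add: vec_eq_iff)
  with \<open>y \<noteq> 0\<close> show False ..
qed

lemma lap_del_kernel_entries_nonzero:
  fixes wE :: "'m::finite option \<Rightarrow> 'm option \<Rightarrow> real"
  assumes sym: "\<And>u v. wE u v = wE v u" and nonneg: "\<And>u v. 0 \<le> wE u v"
    and conn_Gi: "pos_connected (UNIV - {None}) wE" and "0 < \<mu>"
    and bound: "\<And>y. y \<bullet> (wv_del wV *v y) \<le> \<mu> * (y \<bullet> (lap_del wE *v y))"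
    and ker: "(\<mu> *\<^sub>R lap_del wE - wv_del wV) *v x = 0" and "x \<noteq> 0"
  shows "x $ j \<noteq> 0"
proof -
  have "(\<chi> j. \<bar>x $ j\<bar>) \<noteq> 0" using \<open>x \<noteq> 0\<close> by (simp add: vec_eq_iff)
  then have "0 < (\<chi> j. \<bar>x $ j\<bar>) $ j"
    using \<open>0 < \<mu>\<close> lap_del_kernel_abs[OF sym nonneg _ bound ker]
    by (intro lap_del_kernel_nonneg_pos[OF nonneg conn_Gi]) auto
  then show ?thesis by simp
qed

theorem theorem12:
  fixes wE :: "'m::finite option \<Rightarrow> 'm option \<Rightarrow> real"
    and wV :: "'m option \<Rightarrow> real"
  assumes sym: "\<And>u v. wE u v = wE v u"
    and nonneg_E: "\<And>u v. wE u v \<ge> 0"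
    and nonneg_V: "\<And>v. wV v \<ge> 0"
    and nonzero_V: "\<exists>v. v \<noteq> None \<and> wV v \<noteq> 0"
    and conn_G: "pos_connected UNIV wE"
    and conn_Gi: "pos_connected (UNIV - {None}) wE"
  shows "\<exists>\<mu>. real_eigenvalue (matrix_inv (lap_del wE) ** wv_del wV) \<mu>
            \<and> (\<forall>lam. real_eigenvalue (matrix_inv (lap_del wE) ** wv_del wV) lam \<longrightarrow> lam \<le> \<mu>)
            \<and> order \<mu> (charpoly (matrix_inv (lap_del wE) ** wv_del wV)) = 1"
proof -
  let ?L = "lap_del wE" and ?W = "wv_del wV"
  have L_pos: "\<And>x. x \<noteq> 0 \<Longrightarrow> 0 < x \<bullet> (?L *v x)"
    using lap_del_pos_def[OF sym nonneg_E conn_G conn_Gi] .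
  obtain g \<mu> where "g \<noteq> 0" and g_max: "g \<bullet> (?W *v g) = \<mu> * (g \<bullet> (?L *v g))"
    and bound: "\<And>y. y \<bullet> (?W *v y) \<le> \<mu> * (y \<bullet> (?L *v y))"
    using rayleigh_quotient_attains_max[OF L_pos, where W = ?W] by blast
  have "0 < \<mu>"
  proof -
    obtain y where Wy: "0 < y \<bullet> (?W *v y)" using wv_del_pos[OF nonneg_V nonzero_V] ..
    then have "0 < y \<bullet> (?L *v y)" by (intro L_pos) auto
    moreover have "0 < \<mu> * (y \<bullet> (?L *v y))" using Wy bound[of y] by linarith
    ultimately show ?thesis by (simp add: zero_less_mult_iff)
  qed
  let ?N = "\<mu> *\<^sub>R ?L - ?W"
  have sym_N: "transpose ?N = ?N" by (rule transpose_scaleR_lap_del_diff_wv_del[OF sym])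
  have "?N *v g = 0"
    using bound g_max by (intro psd_quadratic_form_zero_imp_kernel[OF sym_N])
      (simp_all add: quadratic_form_scaleR_diff)
  then have ker: "?N *v x = 0 \<longleftrightarrow> (\<exists>c. x = c *\<^sub>R g)" for x
    using lap_del_kernel_entries_nonzero[OF sym nonneg_E conn_Gi \<open>0 < \<mu>\<close> bound] \<open>g \<noteq> 0\<close>
    by (intro kernel_eq_span_if_entries_nonzero) auto
  show ?thesis
    using largest_eigenvalue_inv_mult_simple[OF L_pos bound sym_N ker \<open>g \<noteq> 0\<close>]
    by (intro exI[of _ \<mu>]) auto
qed

end
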